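(* Let $b>1$, $p\ge1$ and $R\subseteq\{0,\ldots,p-1\}$ be such that $(p,R)$ is proper. Let $k$ be the greatest divisor of $p$ coprime with $b$. If two states $i,i'$ of $\mathcal{A}_{R,p}$ are Nerode-equivalent, then $i\equiv i'\pmod k$.
   Context: $A_b=\{0,\ldots,b-1\}$. $\mathcal{A}_{R,p}$ is the complete deterministic automaton over $A_b$ with states $\{0,\ldots,p-1\}$, initial state $0$, final states $R$, and transitions $n\xrightarrow{a}(nb+a)\bmod p$. The pair $(p,R)$ is proper if $p$ is the smallest period of the purely periodic set $R+p\mathbb{N}$, i.e. there is no $p'<p$, $p'\ge1$, and $R'\subseteq\{0,\ldots,p'-1\}$ with $R+p\mathbb{N}=R'+p'\mathbb{N}$. Two states $s,s'$ are Nerode-equivalent if for every word $u$, $s\cdot u$ is final iff $s'\cdot u$ is final, where $s\cdot u$ is the state reached from $s$ by reading $u$. *)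

theory Defs
  imports Main
begin

text \<open>The automaton A_{R,p} over the alphabet A_b = {0,...,b-1}:
  states {0,...,p-1}, initial state 0, final states R,
  transitions n --a--> (n*b + a) mod p.\<close>

definition aut_step :: "nat \<Rightarrow> nat \<Rightarrow> nat \<Rightarrow> nat \<Rightarrow> nat" where
  "aut_step b p n a = (n * b + a) mod p"

definition aut_run :: "nat \<Rightarrow> nat \<Rightarrow> nat \<Rightarrow> nat list \<Rightarrow> nat" where
  "aut_run b p s u = foldl (aut_step b p) s u"

definition nerode_equiv :: "nat \<Rightarrow> nat \<Rightarrow> nat set \<Rightarrow> nat \<Rightarrow> nat \<Rightarrow> bool" where
  "nerode_equiv b p R s s' \<longleftrightarrow>
     (\<forall>u \<in> lists {0..<b}. (aut_run b p s u \<in> R) \<longleftrightarrow> (aut_run b p s' u \<in> R))"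

definition per_set :: "nat set \<Rightarrow> nat \<Rightarrow> nat set" where
  "per_set R p = {r + p * n | r n. r \<in> R}"

definition proper :: "nat \<Rightarrow> nat set \<Rightarrow> bool" where
  "proper p R \<longleftrightarrow>
     \<not> (\<exists>p' R'. 1 \<le> p' \<and> p' < p \<and> R' \<subseteq> {0..<p'} \<and> per_set R p = per_set R' p')"

end

theory Submission
  imports Defs "HOL-Number_Theory.Cong"
begin

text \<open>Reading a word u of length p from state i leads to (i b^p + [u]_b) mod p, and since
  b^p > p every residue occurs as a value [u]_b. So if i and i' are Nerode-equivalent, the
  translates of R + pN by t = i b^p mod p and t' = i' b^p mod p agree. If t \<noteq> t', the
  periodic set R + pN would then also have period |t - t'|, hence the smaller period
  gcd(|t - t'|, p), contradicting properness. Thus i b^p \<equiv> i' b^p (mod p), in particular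
  modulo k, and b^p is invertible modulo k.\<close>

definition word_value :: "nat \<Rightarrow> nat list \<Rightarrow> nat" where
  "word_value b u = foldl (\<lambda>v a. v * b + a) 0 u"

lemma aut_run_eq_mod:
  assumes "s < p"
  shows "aut_run b p s u = (s * b ^ length u + word_value b u) mod p"
proof (induction u rule: rev_induct)
  case Nil
  then show ?case using assms by (simp add: aut_run_def word_value_def)
next
  case (snoc a u)
  have "aut_run b p s (u @ [a]) = (aut_run b p s u * b + a) mod p"
    by (simp add: aut_run_def aut_step_def)
  also have "\<dots> = (((s * b ^ length u + word_value b u) mod p) * b + a) mod p"
    using snoc by simp
  also have "\<dots> = ((s * b ^ length u + word_value b u) * b + a) mod p"
    by (metis mod_add_left_eq mod_mult_left_eq)
  also have "\<dots> = (s * b ^ length (u @ [a]) + word_value b (u @ [a])) mod p"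
    by (simp add: word_value_def algebra_simps)
  finally show ?case .
qed

lemma ex_word_value_eq:
  assumes "0 < b" and "v < b ^ n"
  shows "\<exists>u \<in> lists {0..<b}. length u = n \<and> word_value b u = v"
  using assms(2)
proof (induction n arbitrary: v)
  case 0
  then show ?case by (auto simp: word_value_def)
next
  case (Suc n)
  have "v div b < b ^ n"
    using Suc.prems assms(1) by (metis div_less_iff_less_mult mult.commute power_Suc)
  then obtain u where u: "u \<in> lists {0..<b}" "length u = n" "word_value b u = v div b"
    using Suc.IH by blast
  show ?case
  proof (intro bexI conjI)
    show "u @ [v mod b] \<in> lists {0..<b}" using u assms(1) by auto
    show "length (u @ [v mod b]) = Suc n" using u by simp
    show "word_value b (u @ [v mod b]) = v" using u by (simp add: word_value_def)
  qed
qed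

lemma periodic_add_mult:
  fixes d n :: nat
  assumes "\<And>x. P (x + d) = P x"
  shows "P (x + d * n) = P x"
proof (induction n)
  case (Suc n)
  have "x + d * Suc n = (x + d * n) + d" by simp
  then show ?case using assms[of "x + d * n"] Suc.IH by metis
qed simp

lemma periodic_gcd:
  fixes d p :: nat
  assumes "\<And>x. P (x + d) = P x" and "\<And>x. P (x + p) = P x" and "d \<noteq> 0"
  shows "P (x + gcd d p) = P x"
proof -
  obtain m n where mn: "d * m = p * n + gcd d p"
    using bezout_nat[OF assms(3)] by blast
  have "P (x + gcd d p) = P (x + gcd d p + p * n)"
    using periodic_add_mult[of P, OF assms(2)] by simp
  also have "\<dots> = P (x + d * m)" by (simp add: mn add_ac)
  also have "\<dots> = P x" using periodic_add_mult[of P, OF assms(1)] by simp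
  finally show ?thesis .
qed

lemma periodic_mod:
  fixes g :: nat
  assumes "\<And>x. P (x + g) = P x"
  shows "P (x mod g) = P x"
  using periodic_add_mult[of P, OF assms, of "x mod g" "x div g"] by simp

lemma periodic_of_shift:
  fixes t t' p :: nat
  assumes shift: "\<And>v. P (t + v) = P (t' + v)" and period: "\<And>x. P (x + p) = P x"
    and "t \<le> t'" and "t \<le> p"
  shows "P (x + (t' - t)) = P x"
proof -
  have "P x = P (t + (x + p - t))" using period[of x] assms(4) by simp
  also have "\<dots> = P (t' + (x + p - t))" by (rule shift)
  also have "t' + (x + p - t) = x + (t' - t) + p" using assms(3,4) by simp
  finally show ?thesis using period by simp
qed

lemma per_set_eq:
  assumes "R \<subseteq> {0..<p}"
  shows "per_set R p = {x. x mod p \<in> R}"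
proof (intro set_eqI iffI)
  fix x assume "x \<in> per_set R p"
  then obtain r n where "x = r + p * n" "r \<in> R" unfolding per_set_def by blast
  then show "x \<in> {x. x mod p \<in> R}" using assms by auto
next
  fix x assume "x \<in> {x. x mod p \<in> R}"
  moreover have "x = x mod p + p * (x div p)" by simp
  ultimately show "x \<in> per_set R p" unfolding per_set_def by blast
qed

lemma not_proper_if_period:
  assumes "R \<subseteq> {0..<p}" and "0 < g" and "g < p"
    and period: "\<And>x. ((x + g) mod p \<in> R) = (x mod p \<in> R)"
  shows "\<not> proper p R"
proof -
  define R' where "R' = {r. r < g \<and> r mod p \<in> R}"
  have R': "R' \<subseteq> {0..<g}" by (auto simp: R'_def)
  have "per_set R' g = {x. x mod g mod p \<in> R}"
    using per_set_eq[OF R'] assms(2) by (auto simp: R'_def)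
  also have "\<dots> = per_set R p"
    using periodic_mod[of "\<lambda>x. x mod p \<in> R", OF period] per_set_eq[OF assms(1)] by simp
  finally have "per_set R p = per_set R' g" ..
  moreover have "1 \<le> g" using assms(2) by simp
  ultimately show ?thesis
    unfolding proper_def using R' assms(3) by blast
qed

lemma proper_shift_eq:
  assumes "proper p R" and "R \<subseteq> {0..<p}" and "0 < p"
    and shift: "\<And>v. ((s + v) mod p \<in> R) = ((s' + v) mod p \<in> R)"
  shows "s mod p = s' mod p"
proof -
  define P where "P x \<longleftrightarrow> x mod p \<in> R" for x
  have period: "P (x + p) = P x" for x by (simp add: P_def)
  have no_distinct_shift: False
    if "t < t'" "t' < p" and tt': "\<And>v. P (t + v) = P (t' + v)" for t t'
  proof -
    define g where "g = gcd (t' - t) p"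
    have "P (x + (t' - t)) = P x" for x
      using periodic_of_shift[OF tt' period] that(1,2) by simp
    then have g_period: "P (x + g) = P x" for x
      unfolding g_def using periodic_gcd[of P "t' - t" p] period that(1) by simp
    have "0 < g" using that(1) by (simp add: g_def)
    moreover have "g < p"
      using that(1,2) gcd_le1_nat[of "t' - t" p] unfolding g_def by linarith
    ultimately have "\<not> proper p R"
      using not_proper_if_period[OF assms(2)] g_period unfolding P_def by simp
    then show False using assms(1) by contradiction
  qed
  have shift_mod: "P (s mod p + v) = P (s' mod p + v)" for v
    using shift[of v] by (simp add: P_def mod_add_left_eq)
  show ?thesis
  proof (rule ccontr)
    assume "s mod p \<noteq> s' mod p"
    then consider "s mod p < s' mod p" | "s' mod p < s mod p" by linarith
    then show False
    proof cases
      case 1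
      then show False using no_distinct_shift[OF 1 _ shift_mod] assms(3) by simp
    next
      case 2
      then show False using no_distinct_shift[OF 2 _ shift_mod[symmetric]] assms(3) by simp
    qed
  qed
qed

lemma nerode_equiv_shift:
  assumes "1 < b" and "0 < p" and "i < p" and "i' < p"
    and "nerode_equiv b p R i i'"
  shows "((i * b ^ p + v) mod p \<in> R) = ((i' * b ^ p + v) mod p \<in> R)"
proof -
  have "p < 2 ^ p" by (rule less_exp)
  also have "(2::nat) ^ p \<le> b ^ p" using assms(1) by (simp add: power_mono)
  finally have "v mod p < b ^ p" using assms(2) by (meson mod_less_divisor less_trans)
  then obtain u where u: "u \<in> lists {0..<b}" "length u = p" "word_value b u = v mod p"
    using ex_word_value_eq[of b "v mod p" p] assms(1) by auto
  have "aut_run b p j u = (j * b ^ p + v) mod p" if "j < p" for j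
    unfolding aut_run_eq_mod[OF that] u by (simp add: mod_add_right_eq)
  moreover have "(aut_run b p i u \<in> R) = (aut_run b p i' u \<in> R)"
    using assms(5) u(1) unfolding nerode_equiv_def by blast
  ultimately show ?thesis using assms(3,4) by simp
qed

theorem proposition20:
  fixes b p k i i' :: nat and R :: "nat set"
  assumes "b > 1" and "p \<ge> 1"
    and "R \<subseteq> {0..<p}"
    and "proper p R"
    and "k = (GREATEST d. d dvd p \<and> coprime d b)"
    and "i < p" and "i' < p"
    and "nerode_equiv b p R i i'"
  shows "i mod k = i' mod k"
proof -
  have k: "k dvd p \<and> coprime k b"
    unfolding assms(5)
    by (rule GreatestI_nat[where k = 1 and b = p]) (use assms(2) in \<open>auto intro: dvd_imp_le\<close>)
  have p: "0 < p" using assms(2) by simp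
  have "(i * b ^ p) mod p = (i' * b ^ p) mod p"
    by (rule proper_shift_eq[OF assms(4,3) p nerode_equiv_shift[OF assms(1) p assms(6,7,8)]])
  then have "[i * b ^ p = i' * b ^ p] (mod k)"
    using k cong_dvd_modulus_nat unfolding cong_def by blast
  moreover have "coprime (b ^ p) k" using k by (simp add: ac_simps)
  ultimately have "[i = i'] (mod k)" using cong_mult_rcancel_nat by blast
  then show ?thesis unfolding cong_def .
qed

end
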